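(* Suppose the second-order condition of the context holds with $\gamma_0>-1/2$ and the intermediate sequence $(k_n)$ satisfies $\Phi(k_n/n)=O(k_n^{-1/2})$. Let $W$, $Q_n$, $\tilde a$, $\tilde\Phi$ be as in the context, let $W_n(t)=k_n^{-1/2}W(k_nt)$ (a standard Brownian motion) and $$Y_n(t)=k_n^{1/2}\Big(\frac{Q_n(t)-Q_n(1)}{\tilde a(k_n/n)}-\frac{t^{-\gamma_0}-1}{\gamma_0}\Big).$$ Then for every $\varepsilon>0$, as $n\to\infty$, $$\sup_{0<t\le1}t^{\gamma_0+1/2+\varepsilon}\Big|Y_n(t)-\Big(W_n(1)-t^{-(\gamma_0+1)}W_n(t)+k_n^{1/2}\tilde\Phi\Big(\frac{k_n}{n}\Big)\Psi(t)\Big)\Big|=o_p(1).$$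
   Context: Let $X_1,X_2,\dots$ be i.i.d. with distribution function $F$, $F^{\leftarrow}$ its generalized inverse, $X_{1,n}\le\dots\le X_{n,n}$ the order statistics; $(k_n)$ is intermediate: $k_n\to\infty$, $k_n/n\to0$. Throughout, $(t^{-\gamma_0}-1)/\gamma_0$ is read as $-\log t$ when $\gamma_0=0$. Second-order condition: there exist $\gamma_0>-1/2$ and measurable, locally bounded $a,\Phi:(0,1)\to(0,\infty)$, $\Psi:(0,\infty)\to\mathbb R$ with $\lim_{t\downarrow0}\big[(F^{\leftarrow}(1-tx)-F^{\leftarrow}(1-t))/a(t)-(x^{-\gamma_0}-1)/\gamma_0\big]/\Phi(t)=\Psi(x)$ for all $x>0$, $x\mapsto\Psi(x)/(x^{-\gamma_0}-1)$ not constant, $\Phi$ eventually not changing sign, $\Phi(t)\to0$ as $t\downarrow0$. Construction (available under these assumptions): on a suitable probability space there are a standard Brownian motion $W$ and processes $Q_n$ such that for each $n$, $(Q_n(t))_{t\in[0,1]}$ has the same distribution as $(X_{n-[k_nt],n})_{t\in[0,1]}$, and there are functions with $\tilde a(k_n/n)=a(k_n/n)(1+o(\Phi(k_n/n)))$ and $\tilde\Phi(k_n/n)\sim\Phi(k_n/n)$ such that for all $\varepsilon>0$ $$\sup_{t\in(0,1]}t^{\gamma_0+1/2+\varepsilon}\Big|\frac{Q_n(t)-F^{\leftarrow}(1-k_n/n)}{\tilde a(k_n/n)}-\Big(\frac{t^{-\gamma_0}-1}{\gamma_0}-t^{-(\gamma_0+1)}\frac{W(k_nt)}{k_n}+\tilde\Phi\Big(\frac{k_n}{n}\Big)\Psi(t)\Big)\Big|=o_p(k_n^{-1/2})+o_p\Big(\tilde\Phi\Big(\frac{k_n}{n}\Big)\Big).$$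 *)

theory Defs
  imports "HOL-Probability.Probability" "HOL-Library.Landau_Symbols"
begin

definition hfun :: "real \<Rightarrow> real \<Rightarrow> real" where
  "hfun g x = (if g = 0 then - ln x else (x powr (- g) - 1) / g)"

definition geninv :: "(real \<Rightarrow> real) \<Rightarrow> real \<Rightarrow> real" where
  "geninv F p = Inf {x. p \<le> F x}"

definition ostat :: "(nat \<Rightarrow> 'b \<Rightarrow> real) \<Rightarrow> nat \<Rightarrow> nat \<Rightarrow> 'b \<Rightarrow> real" where
  "ostat X j n \<omega> = sort (map (\<lambda>i. X i \<omega>) [1..<Suc n]) ! (j - 1)"

definition brownian_motion :: "'a measure \<Rightarrow> (real \<Rightarrow> 'a \<Rightarrow> real) \<Rightarrow> bool" where
  "brownian_motion M W \<longleftrightarrow>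
     prob_space M \<and>
     (\<forall>t\<ge>0. W t \<in> borel_measurable M) \<and>
     (AE \<omega> in M. W 0 \<omega> = 0 \<and> continuous_on {0..} (\<lambda>t. W t \<omega>)) \<and>
     (\<forall>s t. 0 \<le> s \<longrightarrow> s < t \<longrightarrow>
        distributed M lborel (\<lambda>\<omega>. W t \<omega> - W s \<omega>)
          (\<lambda>x. ennreal (normal_density 0 (sqrt (t - s)) x))) \<and>
     (\<forall>(ts :: nat \<Rightarrow> real) m. 0 \<le> ts 0 \<and> (\<forall>i<m. ts i \<le> ts (Suc i)) \<longrightarrow>
        prob_space.indep_vars M (\<lambda>_. borel) (\<lambda>i \<omega>. W (ts (Suc i)) \<omega> - W (ts i) \<omega>) {..<m})"

text \<open>Outer probability (no measurability needed).\<close>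
definition outer_prob :: "'a measure \<Rightarrow> 'a set \<Rightarrow> real" where
  "outer_prob M A = (INF B\<in>{B\<in>sets M. A \<inter> space M \<subseteq> B}. measure M B)"

definition sup_oP :: "'a measure \<Rightarrow> (real \<Rightarrow> real) \<Rightarrow> (nat \<Rightarrow> real \<Rightarrow> 'a \<Rightarrow> real)
    \<Rightarrow> (nat \<Rightarrow> real) \<Rightarrow> bool" where
  "sup_oP M w D r \<longleftrightarrow>
     (\<forall>\<delta>>0. (\<lambda>n. outer_prob M {\<omega>\<in>space M. \<exists>t\<in>{0<..1}. \<delta> * r n < w t * \<bar>D n t \<omega>\<bar>})
               \<longlonglongrightarrow> 0)"

end

theory Submission
  imports Defs
begin

text \<open>Subtracting the approximation at \<open>t = 1\<close> from the approximation at \<open>t\<close> cancels the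
  centring constant \<open>F\<^sup>\<leftarrow>(1 - k/n)\<close>; as \<open>hfun \<gamma> 1 = 0\<close> and \<open>\<Psi> 1 = 0\<close>, the quantity to be bounded
  is exactly \<open>\<surd>k\<close> times the difference of the approximation errors at \<open>t\<close> and at \<open>1\<close>. The weight
  is at most \<open>1\<close> on \<open>(0, 1]\<close> and equals \<open>1\<close> at \<open>1\<close>, so the weighted supremum of this difference
  is at most twice that of the error itself, which is \<open>o\<^sub>p(k\<^sup>-\<^sup>1\<^sup>/\<^sup>2 + |\<Phi>\<^sub>t(k/n)|)\<close>; finally
  \<open>\<surd>k (k\<^sup>-\<^sup>1\<^sup>/\<^sup>2 + |\<Phi>\<^sub>t(k/n)|)\<close> stays bounded because \<open>\<Phi>\<^sub>t \<sim> \<Phi> = O(k\<^sup>-\<^sup>1\<^sup>/\<^sup>2)\<close>.\<close>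

lemma outer_prob_nonneg: "0 \<le> outer_prob M A"
  unfolding outer_prob_def
  by (rule cINF_greatest) (auto intro: exI[of _ "space M"])

lemma outer_prob_mono: "A \<subseteq> B \<Longrightarrow> outer_prob M A \<le> outer_prob M B"
  unfolding outer_prob_def
  by (rule cINF_superset_mono) (auto intro!: bdd_belowI[of _ 0])

definition excess_event :: "'a measure \<Rightarrow> (real \<Rightarrow> real) \<Rightarrow> (nat \<Rightarrow> real \<Rightarrow> 'a \<Rightarrow> real)
    \<Rightarrow> (nat \<Rightarrow> real) \<Rightarrow> real \<Rightarrow> nat \<Rightarrow> 'a set" where
  "excess_event M w D r \<delta> n = {\<omega>\<in>space M. \<exists>t\<in>{0<..1}. \<delta> * r n < w t * \<bar>D n t \<omega>\<bar>}"

lemma sup_oP_iff_excess_event: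
  "sup_oP M w D r \<longleftrightarrow> (\<forall>\<delta>>0. (\<lambda>n. outer_prob M (excess_event M w D r \<delta> n)) \<longlonglongrightarrow> 0)"
  by (simp add: sup_oP_def excess_event_def)

lemma sup_oP_by_excess_event_subset:
  assumes "sup_oP M w D r"
    and "\<And>\<delta>. \<delta> > 0 \<Longrightarrow> \<exists>\<delta>'>0. eventually
           (\<lambda>n. excess_event M w D' r' \<delta> n \<subseteq> excess_event M w D r \<delta>' n) sequentially"
  shows "sup_oP M w D' r'"
  unfolding sup_oP_iff_excess_event
proof (intro allI impI)
  fix \<delta> :: real assume "\<delta> > 0"
  then obtain \<delta>' where "\<delta>' > 0"
    and sub: "eventually (\<lambda>n. excess_event M w D' r' \<delta> n \<subseteq> excess_event M w D r \<delta>' n) sequentially"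
    using assms(2) by blast
  with assms(1) have lim: "(\<lambda>n. outer_prob M (excess_event M w D r \<delta>' n)) \<longlonglongrightarrow> 0"
    by (simp add: sup_oP_iff_excess_event)
  show "(\<lambda>n. outer_prob M (excess_event M w D' r' \<delta> n)) \<longlonglongrightarrow> 0"
    by (rule tendsto_sandwich[OF _ _ tendsto_const lim])
      (use sub in \<open>auto elim!: eventually_mono intro: outer_prob_nonneg outer_prob_mono\<close>)
qed

lemma sup_oP_scale:
  assumes "sup_oP M w D r"
  shows "sup_oP M w (\<lambda>n t \<omega>. s n * D n t \<omega>) (\<lambda>n. \<bar>s n\<bar> * r n)"
proof (rule sup_oP_by_excess_event_subset[OF assms])
  have "excess_event M w (\<lambda>n t \<omega>. s n * D n t \<omega>) (\<lambda>n. \<bar>s n\<bar> * r n) \<delta> n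
      \<subseteq> excess_event M w D r \<delta> n" for \<delta> n
  proof (cases "s n = 0")
    case False
    then have "\<delta> * (\<bar>s n\<bar> * r n) < w t * \<bar>s n * D n t \<omega>\<bar> \<longleftrightarrow> \<delta> * r n < w t * \<bar>D n t \<omega>\<bar>" for t \<omega>
      by (simp add: abs_mult mult.left_commute)
    then show ?thesis by (auto simp: excess_event_def)
  qed (auto simp: excess_event_def)
  then show "\<exists>\<delta>'>0. eventually (\<lambda>n. excess_event M w (\<lambda>n t \<omega>. s n * D n t \<omega>) (\<lambda>n. \<bar>s n\<bar> * r n) \<delta> n
      \<subseteq> excess_event M w D r \<delta>' n) sequentially" if "\<delta> > 0" for \<delta>
    using that by (intro exI[of _ \<delta>]) auto
qed

lemma sup_oP_bigo_rate:
  assumes "sup_oP M w D r" and "r \<in> O(r')" and "eventually (\<lambda>n. r' n \<ge> 0) sequentially"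
  shows "sup_oP M w D r'"
proof (rule sup_oP_by_excess_event_subset[OF assms(1)])
  obtain c where "c > 0" and c: "eventually (\<lambda>n. \<bar>r n\<bar> \<le> c * \<bar>r' n\<bar>) sequentially"
    using assms(2) by (auto elim: landau_o.bigE)
  fix \<delta> :: real assume "\<delta> > 0"
  have "eventually (\<lambda>n. excess_event M w D r' \<delta> n \<subseteq> excess_event M w D r (\<delta> / c) n) sequentially"
    using c assms(3)
  proof eventually_elim
    case (elim n)
    have "\<delta> / c * r n \<le> \<delta> / c * (c * r' n)"
      using elim \<open>\<delta> > 0\<close> \<open>c > 0\<close> by (intro mult_left_mono) auto
    then have "\<delta> / c * r n \<le> \<delta> * r' n"
      using \<open>c > 0\<close> by simp
    then show ?case
      by (force simp: excess_event_def)
  qed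
  then show "\<exists>\<delta>'>0. eventually (\<lambda>n. excess_event M w D r' \<delta> n \<subseteq> excess_event M w D r \<delta>' n) sequentially"
    using \<open>\<delta> > 0\<close> \<open>c > 0\<close> by (intro exI[of _ "\<delta> / c"]) auto
qed

lemma sup_oP_pin_at_one:
  assumes "sup_oP M w D r"
    and "w 1 = 1" and "\<And>t. t \<in> {0<..1} \<Longrightarrow> 0 \<le> w t \<and> w t \<le> 1"
  shows "sup_oP M w (\<lambda>n t \<omega>. D n t \<omega> - D n 1 \<omega>) r"
proof (rule sup_oP_by_excess_event_subset[OF assms(1)])
  have "excess_event M w (\<lambda>n t \<omega>. D n t \<omega> - D n 1 \<omega>) r \<delta> n \<subseteq> excess_event M w D r (\<delta> / 2) n"
    for \<delta> n
  proof
    fix \<omega> assume "\<omega> \<in> excess_event M w (\<lambda>n t \<omega>. D n t \<omega> - D n 1 \<omega>) r \<delta> n"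
    then obtain t where \<omega>: "\<omega> \<in> space M" and t: "t \<in> {0<..1}"
      and big: "\<delta> * r n < w t * \<bar>D n t \<omega> - D n 1 \<omega>\<bar>"
      by (auto simp: excess_event_def)
    have "w t * \<bar>D n t \<omega> - D n 1 \<omega>\<bar> \<le> w t * (\<bar>D n t \<omega>\<bar> + \<bar>D n 1 \<omega>\<bar>)"
      using assms(3)[OF t] by (intro mult_left_mono) auto
    also have "\<dots> \<le> w t * \<bar>D n t \<omega>\<bar> + w 1 * \<bar>D n 1 \<omega>\<bar>"
      using assms(2) assms(3)[OF t] by (simp add: distrib_left mult_left_le_one_le)
    finally have "\<delta> / 2 * r n < w t * \<bar>D n t \<omega>\<bar> \<or> \<delta> / 2 * r n < w 1 * \<bar>D n 1 \<omega>\<bar>"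
      using big by linarith
    then show "\<omega> \<in> excess_event M w D r (\<delta> / 2) n"
      using \<omega> t by (auto simp: excess_event_def)
  qed
  then show "\<exists>\<delta>'>0. eventually (\<lambda>n. excess_event M w (\<lambda>n t \<omega>. D n t \<omega> - D n 1 \<omega>) r \<delta> n
      \<subseteq> excess_event M w D r \<delta>' n) sequentially" if "\<delta> > 0" for \<delta>
    using that by (intro exI[of _ "\<delta> / 2"]) auto
qed

lemma sqrt_mult_rate_bigo_one:
  fixes k :: "nat \<Rightarrow> nat" and p q :: "nat \<Rightarrow> real"
  assumes "q \<in> O(\<lambda>n. 1 / sqrt (real (k n)))" and "(\<lambda>n. p n / q n) \<longlonglongrightarrow> 1"
  shows "(\<lambda>n. sqrt (real (k n)) * (1 / sqrt (real (k n)) + \<bar>p n\<bar>)) \<in> O(\<lambda>_. 1)"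
proof -
  have unit: "(\<lambda>n. sqrt (real (k n)) * (1 / sqrt (real (k n)))) \<in> O(\<lambda>_. 1)"
    by (rule landau_o.bigI[of 1]) auto
  have "p \<in> O(q)"
    using assms(2) by (intro asymp_equiv_imp_bigo asymp_equivI')
  then have "p \<in> O(\<lambda>n. 1 / sqrt (real (k n)))"
    using assms(1) by (rule landau_o.big_trans)
  then have "(\<lambda>n. sqrt (real (k n)) * p n) \<in> O(\<lambda>n. sqrt (real (k n)) * (1 / sqrt (real (k n))))"
    by (rule landau_o.big.mult_left)
  then have "(\<lambda>n. \<bar>sqrt (real (k n)) * p n\<bar>) \<in> O(\<lambda>_. 1)"
    using unit by (simp add: landau_o.big_trans)
  with unit show ?thesis
    by (simp add: distrib_left abs_mult sum_in_bigo)
qed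

lemma second_order_limit_at_one:
  fixes G a \<Phi> :: "real \<Rightarrow> real"
  assumes "((\<lambda>t. ((G (1 - t * 1) - G (1 - t)) / a t - hfun g 1) / \<Phi> t) \<longlongrightarrow> L) (at_right 0)"
  shows "L = 0"
proof -
  have "(\<lambda>t. ((G (1 - t * 1) - G (1 - t)) / a t - hfun g 1) / \<Phi> t) = (\<lambda>_. 0)"
    by (simp add: hfun_def)
  with assms have "((\<lambda>_. 0) \<longlongrightarrow> L) (at_right (0 :: real))"
    by simp
  then show ?thesis
    by (simp add: tendsto_const_iff)
qed

lemma sqrt_mult_divide_self: "0 \<le> x \<Longrightarrow> sqrt x * y / x = y / sqrt x"
  by (cases "x = 0") (auto simp: field_simps real_div_sqrt)

theorem lemma3p1:
  fixes N :: "'b measure" and X :: "nat \<Rightarrow> 'b \<Rightarrow> real" and F :: "real \<Rightarrow> real"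
    and k :: "nat \<Rightarrow> nat" and \<gamma> :: real
    and a \<Phi> :: "real \<Rightarrow> real" and \<Psi> :: "real \<Rightarrow> real"
    and M :: "'a measure" and W :: "real \<Rightarrow> 'a \<Rightarrow> real" and Q :: "nat \<Rightarrow> real \<Rightarrow> 'a \<Rightarrow> real"
    and a\<^sub>t \<Phi>\<^sub>t :: "real \<Rightarrow> real"
  assumes
    \<comment> \<open>X_1, X_2, ... i.i.d. with distribution function F\<close>
    N: "prob_space N"
    and X_rv: "\<And>i. X i \<in> borel_measurable N"
    and X_indep: "prob_space.indep_vars N (\<lambda>_. borel) X {1..}"
    and X_F: "\<And>i x. i \<ge> 1 \<Longrightarrow> measure N {\<omega>\<in>space N. X i \<omega> \<le> x} = F x"
    \<comment> \<open>intermediate sequence\<close>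
    and k_inf: "filterlim k at_top sequentially"
    and k_n: "(\<lambda>n. real (k n) / real n) \<longlonglongrightarrow> 0"
    \<comment> \<open>second-order condition\<close>
    and \<gamma>: "\<gamma> > - 1 / 2"
    and a_pos: "\<And>t. t \<in> {0<..<1} \<Longrightarrow> a t > 0"
    and \<Phi>_pos: "\<And>t. t \<in> {0<..<1} \<Longrightarrow> \<Phi> t > 0"
    and a_meas: "a \<in> borel_measurable (restrict_space borel {0<..<1})"
    and \<Phi>_meas: "\<Phi> \<in> borel_measurable (restrict_space borel {0<..<1})"
    and a_lb: "\<And>K. compact K \<Longrightarrow> K \<subseteq> {0<..<1} \<Longrightarrow> bounded (a ` K)"
    and \<Phi>_lb: "\<And>K. compact K \<Longrightarrow> K \<subseteq> {0<..<1} \<Longrightarrow> bounded (\<Phi> ` K)"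
    and SO: "\<And>x. x > 0 \<Longrightarrow>
      ((\<lambda>t. ((geninv F (1 - t * x) - geninv F (1 - t)) / a t - hfun \<gamma> x) / \<Phi> t)
         \<longlongrightarrow> \<Psi> x) (at_right 0)"
    and \<Psi>_nc: "\<not> (\<exists>c. \<forall>x. x > 0 \<longrightarrow> x \<noteq> 1 \<longrightarrow> \<Psi> x / hfun \<gamma> x = c)"
    and \<Phi>_sign: "eventually (\<lambda>t. \<Phi> t \<ge> 0) (at_right 0) \<or> eventually (\<lambda>t. \<Phi> t \<le> 0) (at_right 0)"
    and \<Phi>_0: "(\<Phi> \<longlongrightarrow> 0) (at_right 0)"
    \<comment> \<open>rate condition\<close>
    and \<Phi>_O: "(\<lambda>n. \<Phi> (real (k n) / real n)) \<in> O(\<lambda>n. 1 / sqrt (real (k n)))"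
    \<comment> \<open>the construction\<close>
    and BM: "brownian_motion M W"
    and Q_distr: "\<And>n. distr M (Pi\<^sub>M {0..1} (\<lambda>_. borel)) (\<lambda>\<omega>. \<lambda>t\<in>{0..1}. Q n t \<omega>)
                 = distr N (Pi\<^sub>M {0..1} (\<lambda>_. borel))
                     (\<lambda>\<omega>. \<lambda>t\<in>{0..1}. ostat X (n - nat \<lfloor>real (k n) * t\<rfloor>) n \<omega>)"
    and a\<^sub>t_a: "(\<lambda>n. (a\<^sub>t (real (k n) / real n) / a (real (k n) / real n) - 1)
                      / \<Phi> (real (k n) / real n)) \<longlonglongrightarrow> 0"
    and \<Phi>\<^sub>t_\<Phi>: "(\<lambda>n. \<Phi>\<^sub>t (real (k n) / real n) / \<Phi> (real (k n) / real n)) \<longlonglongrightarrow> 1"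
    and approx: "\<And>\<epsilon>. \<epsilon> > 0 \<Longrightarrow> sup_oP M (\<lambda>t. t powr (\<gamma> + 1 / 2 + \<epsilon>))
       (\<lambda>n t \<omega>. (Q n t \<omega> - geninv F (1 - real (k n) / real n)) / a\<^sub>t (real (k n) / real n)
           - (hfun \<gamma> t - t powr (- (\<gamma> + 1)) * W (real (k n) * t) \<omega> / real (k n)
              + \<Phi>\<^sub>t (real (k n) / real n) * \<Psi> t))
       (\<lambda>n. 1 / sqrt (real (k n)) + \<bar>\<Phi>\<^sub>t (real (k n) / real n)\<bar>)"
  shows "\<And>\<epsilon>. \<epsilon> > 0 \<Longrightarrow> sup_oP M (\<lambda>t. t powr (\<gamma> + 1 / 2 + \<epsilon>))
       (\<lambda>n t \<omega>.
          sqrt (real (k n)) * ((Q n t \<omega> - Q n 1 \<omega>) / a\<^sub>t (real (k n) / real n) - hfun \<gamma> t)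
          - (W (real (k n)) \<omega> / sqrt (real (k n))
             - t powr (- (\<gamma> + 1)) * (W (real (k n) * t) \<omega> / sqrt (real (k n)))
             + sqrt (real (k n)) * \<Phi>\<^sub>t (real (k n) / real n) * \<Psi> t))
       (\<lambda>n. 1)"
proof -
  fix \<epsilon> :: real assume "\<epsilon> > 0"
  define w where "w t = t powr (\<gamma> + 1 / 2 + \<epsilon>)" for t :: real
  define D where "D n t \<omega> = (Q n t \<omega> - geninv F (1 - real (k n) / real n)) / a\<^sub>t (real (k n) / real n)
           - (hfun \<gamma> t - t powr (- (\<gamma> + 1)) * W (real (k n) * t) \<omega> / real (k n)
              + \<Phi>\<^sub>t (real (k n) / real n) * \<Psi> t)" for n t \<omega>
  have "\<Psi> 1 = 0"
    by (rule second_order_limit_at_one[OF SO[OF zero_less_one]])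
  have "sup_oP M w (\<lambda>n t \<omega>. D n t \<omega> - D n 1 \<omega>)
      (\<lambda>n. 1 / sqrt (real (k n)) + \<bar>\<Phi>\<^sub>t (real (k n) / real n)\<bar>)"
    using approx[OF \<open>\<epsilon> > 0\<close>] \<gamma> \<open>\<epsilon> > 0\<close>
    unfolding w_def[abs_def] D_def[abs_def] by (intro sup_oP_pin_at_one) (auto intro: powr_le1)
  then have "sup_oP M w (\<lambda>n t \<omega>. sqrt (real (k n)) * (D n t \<omega> - D n 1 \<omega>))
      (\<lambda>n. sqrt (real (k n)) * (1 / sqrt (real (k n)) + \<bar>\<Phi>\<^sub>t (real (k n) / real n)\<bar>))"
    using sup_oP_scale[where s = "\<lambda>n. sqrt (real (k n))"] by simp
  moreover have "(\<lambda>n. sqrt (real (k n)) * (1 / sqrt (real (k n)) + \<bar>\<Phi>\<^sub>t (real (k n) / real n)\<bar>))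
      \<in> O(\<lambda>_. 1)"
    using \<Phi>_O \<Phi>\<^sub>t_\<Phi> by (rule sqrt_mult_rate_bigo_one)
  ultimately have "sup_oP M w (\<lambda>n t \<omega>. sqrt (real (k n)) * (D n t \<omega> - D n 1 \<omega>)) (\<lambda>_. 1)"
    by (rule sup_oP_bigo_rate) simp
  moreover have "sqrt (real (k n)) * ((Q n t \<omega> - Q n 1 \<omega>) / a\<^sub>t (real (k n) / real n) - hfun \<gamma> t)
          - (W (real (k n)) \<omega> / sqrt (real (k n))
             - t powr (- (\<gamma> + 1)) * (W (real (k n) * t) \<omega> / sqrt (real (k n)))
             + sqrt (real (k n)) * \<Phi>\<^sub>t (real (k n) / real n) * \<Psi> t)
      = sqrt (real (k n)) * (D n t \<omega> - D n 1 \<omega>)" for n t \<omega>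
  proof -
    have "D n t \<omega> - D n 1 \<omega> = (Q n t \<omega> - Q n 1 \<omega>) / a\<^sub>t (real (k n) / real n) - hfun \<gamma> t
        + t powr (- (\<gamma> + 1)) * W (real (k n) * t) \<omega> / real (k n) - W (real (k n)) \<omega> / real (k n)
        - \<Phi>\<^sub>t (real (k n) / real n) * \<Psi> t"
      using \<open>\<Psi> 1 = 0\<close> by (simp add: D_def hfun_def diff_divide_distrib)
    then show ?thesis
      by (simp add: right_diff_distrib distrib_left sqrt_mult_divide_self)
  qed
  ultimately show "?thesis \<epsilon>"
    unfolding w_def[abs_def] by simp
qed

end
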